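(* Let $V$ be a homogeneous degree-$d$ divergence-free vector field on $\mathbf{C}^3$ not vanishing on $\mathbf{C}^3\setminus\{0\}$, with induced foliation $\mathcal{F}$ of $\mathbf{P}^2_{\mathbf{C}}$ and real field $W$. Let $p\in\mathbf{C}^3\setminus\{0\}$ with $p\cdot V(p)=0$, so that $b=\Pi(p)$ is a zero of $W$ on the regular part of $\mathcal{F}$. Then, for the restriction of $W$ to the leaf of $\mathcal{F}$ through $b$, the zero $b$: (1) is a sink if and only if $\|V(p)\|^2>|DV(V)(p)\cdot p|$; (2) is a saddle if and only if $\|V(p)\|^2<|DV(V)(p)\cdot p|$; (3) is never a source.
   Context: $\Pi:\mathbf{C}^3\setminus\{0\}\to\mathbf{P}^2_{\mathbf{C}}$ is the quotient map, $p\cdot p'=x\bar x'+y\bar y'+z\bar z'$ the standard Hermitian product, $\|\cdot\|$ its norm. Writing $V=\sum_{k\in\{x,y,z\}}V_k\,\partial_k$, $DV(V)$ is the vector field with components $DV(V)_k=\sum_{l\in\{x,y,z\}}V_l\,\partial V_k/\partial l$. The real field $W$ is the projection to $\mathbf{P}^2_{\mathbf{C}}$ of the real vector field $\mathrm{Re}(\tilde\rho V)$ with $\tilde\rho(p)=-2(p\cdot V(p))/\|p\|^{2d}$ (the leafwise gradient of $-\log\|p\|^2$ for the leafwise metric $\tilde g_p(V(p))=\|p\|^{2d-2}$). A zero is a sink (resp. source) if all eigenvalues of the linearization have negative (resp. positive) real part, and a saddle if the real parts are nonzero with some of opposite signs. *)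

theory Defs
  imports "HOL-Analysis.Analysis"
begin

text \<open>Points of C^3 are elements of type complex^3, with coordinates
  q$1 = x, q$2 = y, q$3 = z.  A (complex) vector field on C^3 is a map
  complex^3 \<Rightarrow> complex^3.\<close>

definition homogeneous_poly_field :: "nat \<Rightarrow> (complex^3 \<Rightarrow> complex^3) \<Rightarrow> bool" where
  "homogeneous_poly_field d V \<longleftrightarrow>
     (\<exists>c :: 3 \<Rightarrow> nat \<Rightarrow> nat \<Rightarrow> complex. \<forall>k q.
        V q $ k = (\<Sum>(i,j)\<in>{(i,j). i + j \<le> d}.
                      c k i j * (q$1)^i * (q$2)^j * (q$3)^(d - i - j)))"

definition pderiv_field :: "(complex^3 \<Rightarrow> complex^3) \<Rightarrow> 3 \<Rightarrow> 3 \<Rightarrow> complex^3 \<Rightarrow> complex" where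
  "pderiv_field V k l q = deriv (\<lambda>t. V (q + t *s axis l 1) $ k) 0"

definition divergence :: "(complex^3 \<Rightarrow> complex^3) \<Rightarrow> complex^3 \<Rightarrow> complex" where
  "divergence V q = (\<Sum>k\<in>UNIV. pderiv_field V k k q)"

definition DVV :: "(complex^3 \<Rightarrow> complex^3) \<Rightarrow> complex^3 \<Rightarrow> complex^3" where
  "DVV V q = (\<chi> k. \<Sum>l\<in>UNIV. V q $ l * pderiv_field V k l q)"

definition herm :: "complex^3 \<Rightarrow> complex^3 \<Rightarrow> complex" where
  "herm p p' = (\<Sum>k\<in>UNIV. p$k * cnj (p'$k))"

definition rho_tilde :: "nat \<Rightarrow> (complex^3 \<Rightarrow> complex^3) \<Rightarrow> complex^3 \<Rightarrow> complex" where
  "rho_tilde d V q = -2 * herm q (V q) / complex_of_real (norm q ^ (2*d))"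

text \<open>The real vector field Re(rho~ V) on C^3 - {0} (C^3 viewed as R^6);
  its projection by Pi is W.\<close>
definition W_lift :: "nat \<Rightarrow> (complex^3 \<Rightarrow> complex^3) \<Rightarrow> complex^3 \<Rightarrow> complex^3" where
  "W_lift d V q = rho_tilde d V q *s V q"

text \<open>Linearization at b = Pi(p) of the restriction of W to the leaf through b,
  written in the complex coordinate s of the tangent line
  T_b L = { s * dPi_p(V(p)) : s \<in> C }.  Since W is Pi-related to W_lift and
  W_lift(p) = 0, DW(b)(dPi_p h) = dPi_p(D W_lift(p) h); for h = s V(p) the vector
  D W_lift(p) h lies in C V(p), and its coefficient with respect to V(p)
  (p and V(p) being Hermitian-orthogonal) is extracted below.  This is an
  R-linear map C \<rightarrow> C, i.e. a real linear endomorphism of the 2-dimensional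
  real tangent plane of the leaf.\<close>
definition leaf_linearization :: "nat \<Rightarrow> (complex^3 \<Rightarrow> complex^3) \<Rightarrow> complex^3 \<Rightarrow> complex \<Rightarrow> complex" where
  "leaf_linearization d V p s =
     herm (frechet_derivative (W_lift d V) (at p) (s *s V p)) (V p)
       / complex_of_real ((norm (V p))^2)"

text \<open>Eigenvalues of an R-linear map L : C \<rightarrow> C (= R^2), i.e. the complex roots of
  the characteristic polynomial of its real 2x2 matrix with columns L(1), L(i).\<close>
definition real_lin_eigenvalues :: "(complex \<Rightarrow> complex) \<Rightarrow> complex set" where
  "real_lin_eigenvalues L =
     (let a11 = Re (L 1); a21 = Im (L 1); a12 = Re (L \<i>); a22 = Im (L \<i>)
      in {ev. ev^2 - complex_of_real (a11 + a22) * ev + complex_of_real (a11*a22 - a12*a21) = 0})"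

definition is_sink :: "(complex \<Rightarrow> complex) \<Rightarrow> bool" where
  "is_sink L \<longleftrightarrow> (\<forall>ev\<in>real_lin_eigenvalues L. Re ev < 0)"

definition is_source :: "(complex \<Rightarrow> complex) \<Rightarrow> bool" where
  "is_source L \<longleftrightarrow> (\<forall>ev\<in>real_lin_eigenvalues L. Re ev > 0)"

definition is_saddle :: "(complex \<Rightarrow> complex) \<Rightarrow> bool" where
  "is_saddle L \<longleftrightarrow> (\<forall>ev\<in>real_lin_eigenvalues L. Re ev \<noteq> 0)
     \<and> (\<exists>ev\<in>real_lin_eigenvalues L. Re ev < 0) \<and> (\<exists>ev\<in>real_lin_eigenvalues L. Re ev > 0)"

end

theory Submission
  imports Defs
begin

(* Because p . V(p) = 0, the factor rho~ of W_lift = rho~ V vanishes at p, so its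
   derivative there is h |-> (D rho~(p) h) V(p): only rho~ has to be differentiated.
   In the leaf direction h = s V(p) this gives the R-linear map
     s |-> c (|V(p)|^2 s + B conj s),   c = -2 / |p|^(2d) < 0,   B = p . DV(V)(p),
   whose eigenvalues are c (|V(p)|^2 + |B|) and c (|V(p)|^2 - |B|).  The first is
   always negative; the second is negative or positive according as |V(p)|^2 > |B|
   or |V(p)|^2 < |B|, and |B| = |DV(V)(p) . p|. *)

lemma has_derivative_vec_componentwise:
  fixes f :: "'a::real_normed_vector \<Rightarrow> 'b::euclidean_space^'n"
  assumes "\<And>i. ((\<lambda>x. f x $ i) has_derivative (\<lambda>h. f' h $ i)) (at x within S)"
  shows "(f has_derivative f') (at x within S)"
proof -
  have "((\<lambda>x. f x \<bullet> b) has_derivative (\<lambda>h. f' h \<bullet> b)) (at x within S)" if "b \<in> Basis" for b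
  proof -
    from that obtain k c where b: "b = axis k c" "c \<in> Basis" unfolding Basis_vec_def by auto
    have "((\<lambda>x. f x $ k \<bullet> c) has_derivative (\<lambda>h. f' h $ k \<bullet> c)) (at x within S)"
      by (rule bounded_linear.has_derivative[OF bounded_linear_inner_left assms])
    then show ?thesis using b by (simp add: inner_axis)
  qed
  then show ?thesis by (subst has_derivative_componentwise_within) blast
qed

lemma has_derivative_vec_smult_vanishing:
  fixes v :: "'a::real_normed_vector \<Rightarrow> complex^'n"
  assumes "(r has_derivative r') (at x within S)" and "r x = 0"
    and "(v has_derivative v') (at x within S)"
  shows "((\<lambda>y. r y *s v y) has_derivative (\<lambda>h. r' h *s v x)) (at x within S)"
proof (rule has_derivative_vec_componentwise)
  fix k
  have "((\<lambda>y. r y * v y $ k) has_derivative (\<lambda>h. r x * v' h $ k + r' h * v x $ k))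
          (at x within S)"
    by (intro has_derivative_mult assms bounded_linear.has_derivative[OF bounded_linear_vec_nth])
  then show "((\<lambda>y. (r y *s v y) $ k) has_derivative (\<lambda>h. (r' h *s v x) $ k))
          (at x within S)"
    using assms(2) by simp
qed

definition complex_differentiable_everywhere :: "(complex^'n \<Rightarrow> complex) \<Rightarrow> bool" where
  "complex_differentiable_everywhere f \<longleftrightarrow>
     (\<forall>q. \<exists>a::complex^'n. (f has_derivative (\<lambda>h. \<Sum>l\<in>UNIV. a$l * h$l)) (at q))"

lemma complex_differentiable_everywhere_const:
  "complex_differentiable_everywhere (\<lambda>q. c)"
  unfolding complex_differentiable_everywhere_def by (intro allI exI[of _ 0]) simp

lemma complex_differentiable_everywhere_coord:
  fixes m :: "'n::finite"
  shows "complex_differentiable_everywhere (\<lambda>q. q$m)"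
  unfolding complex_differentiable_everywhere_def
proof (intro allI exI)
  fix q :: "complex^'n"
  have "(\<Sum>l\<in>UNIV. axis m 1 $ l * h$l) = (\<Sum>l\<in>UNIV. if l = m then h$l else 0)"
    for h :: "complex^'n"
    by (rule sum.cong) (auto simp: axis_def)
  then show "((\<lambda>q. q$m) has_derivative (\<lambda>h. \<Sum>l\<in>UNIV. axis m 1 $ l * h$l)) (at q)"
    using bounded_linear.has_derivative[OF bounded_linear_vec_nth has_derivative_ident] by simp
qed

lemma complex_differentiable_everywhere_add:
  assumes "complex_differentiable_everywhere f" and "complex_differentiable_everywhere g"
  shows "complex_differentiable_everywhere (\<lambda>q. f q + g q)"
  unfolding complex_differentiable_everywhere_def
proof
  fix q
  obtain a b where
    a: "(f has_derivative (\<lambda>h. \<Sum>l\<in>UNIV. a$l * h$l)) (at q)" and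
    b: "(g has_derivative (\<lambda>h. \<Sum>l\<in>UNIV. b$l * h$l)) (at q)"
    using assms unfolding complex_differentiable_everywhere_def by blast
  show "\<exists>c. ((\<lambda>q. f q + g q) has_derivative (\<lambda>h. \<Sum>l\<in>UNIV. c$l * h$l)) (at q)"
    using has_derivative_add[OF a b]
    by (intro exI[of _ "a + b"]) (simp add: distrib_right sum.distrib)
qed

lemma complex_differentiable_everywhere_mult:
  assumes "complex_differentiable_everywhere f" and "complex_differentiable_everywhere g"
  shows "complex_differentiable_everywhere (\<lambda>q. f q * g q)"
  unfolding complex_differentiable_everywhere_def
proof
  fix q
  obtain a b where
    a: "(f has_derivative (\<lambda>h. \<Sum>l\<in>UNIV. a$l * h$l)) (at q)" and
    b: "(g has_derivative (\<lambda>h. \<Sum>l\<in>UNIV. b$l * h$l)) (at q)"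
    using assms unfolding complex_differentiable_everywhere_def by blast
  have "(\<lambda>h. f q * (\<Sum>l\<in>UNIV. b$l * h$l) + (\<Sum>l\<in>UNIV. a$l * h$l) * g q)
      = (\<lambda>h. \<Sum>l\<in>UNIV. (f q *s b + g q *s a)$l * h$l)"
    by (simp add: sum_distrib_left sum_distrib_right sum.distrib[symmetric] algebra_simps)
  then show "\<exists>c. ((\<lambda>q. f q * g q) has_derivative (\<lambda>h. \<Sum>l\<in>UNIV. c$l * h$l)) (at q)"
    using has_derivative_mult[OF a b] by (intro exI[of _ "f q *s b + g q *s a"]) simp
qed

lemma complex_differentiable_everywhere_power:
  "complex_differentiable_everywhere f \<Longrightarrow> complex_differentiable_everywhere (\<lambda>q. f q ^ n)"
  by (induction n)
    (simp_all add: complex_differentiable_everywhere_const complex_differentiable_everywhere_mult)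

lemma complex_differentiable_everywhere_sum:
  "finite S \<Longrightarrow> (\<And>s. s \<in> S \<Longrightarrow> complex_differentiable_everywhere (f s)) \<Longrightarrow>
    complex_differentiable_everywhere (\<lambda>q. \<Sum>s\<in>S. f s q)"
  by (induction S rule: finite_induct)
    (simp_all add: complex_differentiable_everywhere_const complex_differentiable_everywhere_add)

lemma homogeneous_poly_field_has_jacobian:
  assumes "homogeneous_poly_field d V"
  obtains J :: "complex^3^3" where "(V has_derivative (\<lambda>h. J *v h)) (at q)"
proof -
  obtain c where c: "\<forall>k q. V q $ k = (\<Sum>(i,j)\<in>{(i,j). i + j \<le> d}.
                      c k i j * (q$1)^i * (q$2)^j * (q$3)^(d - i - j))"
    using assms unfolding homogeneous_poly_field_def by blast
  have fin: "finite {(i,j). i + j \<le> d}"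
    by (rule finite_subset[of _ "{..d} \<times> {..d}"]) auto
  have "complex_differentiable_everywhere (\<lambda>q. V q $ k)" for k
  proof -
    have "complex_differentiable_everywhere (\<lambda>q. \<Sum>(i,j)\<in>{(i,j). i + j \<le> d}.
            c k i j * (q$1)^i * (q$2)^j * (q$3)^(d - i - j))"
      by (rule complex_differentiable_everywhere_sum[OF fin], clarify)
        (intro complex_differentiable_everywhere_mult complex_differentiable_everywhere_power
          complex_differentiable_everywhere_const complex_differentiable_everywhere_coord)
    then show ?thesis using c by simp
  qed
  then have "\<forall>k. \<exists>a. ((\<lambda>q. V q $ k) has_derivative (\<lambda>h. \<Sum>l\<in>UNIV. a $ l * h$l)) (at q)"
    unfolding complex_differentiable_everywhere_def by blast
  then obtain a where a: "\<And>k. ((\<lambda>q. V q $ k) has_derivative (\<lambda>h. \<Sum>l\<in>UNIV. a k $ l * h$l)) (at q)"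
    by metis
  have "(V has_derivative (\<lambda>h. (\<chi> k. a k) *v h)) (at q)"
    by (rule has_derivative_vec_componentwise) (simp add: matrix_vector_mult_def a)
  then show ?thesis by (rule that)
qed

lemma matrix_vector_mult_smult:
  fixes J :: "'a::comm_semiring_1^'n^'m"
  shows "J *v (s *s x) = s *s (J *v x)"
  by (simp add: vec_eq_iff matrix_vector_mult_def sum_distrib_left algebra_simps)

lemma pderiv_field_jacobian:
  assumes "(V has_derivative (\<lambda>h. J *v h)) (at p)"
  shows "pderiv_field V k l p = J$k$l"
proof -
  have line: "((\<lambda>t::complex. p + t *s axis l 1) has_derivative (\<lambda>t. t *s axis l 1)) (at 0)"
    by (rule has_derivative_vec_componentwise) (auto intro!: derivative_eq_intros)
  have "((\<lambda>t. V (p + t *s axis l 1)) has_derivative (\<lambda>t. J *v (t *s axis l 1))) (at 0)"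
    using diff_chain_at[OF line] assms by (simp add: o_def)
  from bounded_linear.has_derivative[OF bounded_linear_vec_nth[of k] this]
  have "((\<lambda>t. V (p + t *s axis l 1) $ k) has_field_derivative J$k$l) (at 0)"
    unfolding has_field_derivative_def
    by (simp add: matrix_vector_mult_smult matrix_vector_mult_def axis_def if_distrib
        cong: if_cong)
  then show ?thesis
    unfolding pderiv_field_def by (rule DERIV_imp_deriv)
qed

lemma DVV_jacobian:
  assumes "(V has_derivative (\<lambda>h. J *v h)) (at p)"
  shows "DVV V p = J *v V p"
  by (simp add: vec_eq_iff DVV_def matrix_vector_mult_def pderiv_field_jacobian[OF assms]
      mult.commute)

lemma herm_self: "herm v v = of_real ((norm v)^2)"
proof -
  have "(norm v)^2 = (\<Sum>i\<in>UNIV. (cmod (v$i))^2)"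
    unfolding norm_vec_def L2_set_def by (simp add: sum_nonneg)
  moreover have "herm v v = (\<Sum>i\<in>UNIV. of_real ((cmod (v$i))^2))"
    unfolding herm_def by (simp only: complex_norm_square)
  ultimately show ?thesis by (simp only: of_real_sum)
qed

lemma herm_commute: "herm v w = cnj (herm w v)"
  unfolding herm_def by (simp add: mult.commute)

lemma herm_smult_left: "herm (s *s v) w = s * herm v w"
  unfolding herm_def by (simp add: sum_distrib_left algebra_simps)

lemma herm_smult_right: "herm v (s *s w) = cnj s * herm v w"
  unfolding herm_def by (simp add: sum_distrib_left algebra_simps)

lemma has_derivative_herm:
  assumes "(f has_derivative f') (at x within S)" and "(g has_derivative g') (at x within S)"
  shows "((\<lambda>x. herm (f x) (g x)) has_derivative (\<lambda>h. herm (f' h) (g x) + herm (f x) (g' h)))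
           (at x within S)"
proof -
  have "((\<lambda>x. f x $ k * cnj (g x $ k)) has_derivative
          (\<lambda>h. f x $ k * cnj (g' h $ k) + f' h $ k * cnj (g x $ k))) (at x within S)" for k
    by (intro has_derivative_mult has_derivative_cnj
        bounded_linear.has_derivative[OF bounded_linear_vec_nth] assms)
  then show ?thesis
    unfolding herm_def by (auto intro!: has_derivative_eq_rhs[OF has_derivative_sum]
        simp: sum.distrib algebra_simps)
qed

lemma has_derivative_rho_tilde_at_zero:
  assumes V': "(V has_derivative V') (at p)" and "p \<noteq> 0" and "herm p (V p) = 0"
  shows "(rho_tilde d V has_derivative
           (\<lambda>h. -2 * (herm h (V p) + herm p (V' h)) / of_real (norm p ^ (2*d)))) (at p)"
proof -
  have num: "((\<lambda>q. -2 * herm q (V q)) has_derivative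
               (\<lambda>h. -2 * (herm h (V p) + herm p (V' h)))) (at p)"
    by (intro has_derivative_mult_right has_derivative_herm has_derivative_ident V')
  obtain N' where den: "((\<lambda>q. of_real (norm q ^ (2*d)) :: complex) has_derivative N') (at p)"
    using has_derivative_of_real[OF has_derivative_power[OF has_derivative_norm[OF \<open>p \<noteq> 0\<close>]]]
    by blast
  from has_derivative_divide[OF num den] show ?thesis
    using assms(2,3) unfolding rho_tilde_def[abs_def] by simp
qed

lemma leaf_linearization_eq:
  assumes J: "(V has_derivative (\<lambda>h. J *v h)) (at p)"
    and "p \<noteq> 0" and "herm p (V p) = 0" and "V p \<noteq> 0"
  shows "leaf_linearization d V p s = of_real (-2 / norm p ^ (2*d)) *
           (of_real ((norm (V p))^2) * s + herm p (DVV V p) * cnj s)"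
proof -
  define \<rho>' where "\<rho>' h = -2 * (herm h (V p) + herm p (J *v h)) / of_real (norm p ^ (2*d))"
    for h
  have "rho_tilde d V p = 0"
    unfolding rho_tilde_def using assms(3) by simp
  from has_derivative_vec_smult_vanishing[OF has_derivative_rho_tilde_at_zero[OF J assms(2,3)]
      this J]
  have "(W_lift d V has_derivative (\<lambda>h. \<rho>' h *s V p)) (at p)"
    unfolding W_lift_def[abs_def] \<rho>'_def .
  then have "frechet_derivative (W_lift d V) (at p) = (\<lambda>h. \<rho>' h *s V p)"
    by (rule frechet_derivative_at[symmetric])
  then have "leaf_linearization d V p s = \<rho>' (s *s V p)"
    using assms(4) by (simp add: leaf_linearization_def herm_smult_left herm_self)
  also have "\<dots> = of_real (-2 / norm p ^ (2*d)) *
                    (of_real ((norm (V p))^2) * s + herm p (DVV V p) * cnj s)"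
    using assms(2)
    by (simp add: \<rho>'_def herm_smult_left herm_smult_right herm_self matrix_vector_mult_smult
        DVV_jacobian[OF J] field_simps)
  finally show ?thesis .
qed

lemma real_lin_eigenvalues_conj_linear:
  fixes A c :: real and B :: complex
  shows "real_lin_eigenvalues (\<lambda>s. of_real c * (of_real A * s + B * cnj s)) =
           {of_real (c * (A + cmod B)), of_real (c * (A - cmod B))}"
proof -
  define L where "L s = of_real c * (of_real A * s + B * cnj s)" for s
  have "Re (L 1) + Im (L \<i>) = 2 * c * A"
    by (simp add: L_def algebra_simps)
  moreover have "Re (L 1) * Im (L \<i>) - Re (L \<i>) * Im (L 1) = c^2 * (A^2 - (cmod B)^2)"
    unfolding cmod_power2 by (simp add: L_def algebra_simps power2_eq_square)
  moreover have "ev^2 - of_real (2 * c * A) * ev + of_real (c^2 * (A^2 - (cmod B)^2))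
             = (ev - of_real (c * (A + cmod B))) * (ev - of_real (c * (A - cmod B)))"
    for ev :: complex
    by (simp add: algebra_simps power2_eq_square)
  ultimately show ?thesis
    unfolding real_lin_eigenvalues_def Let_def L_def[symmetric] by auto
qed

lemma conj_linear_stability:
  fixes A c :: real and B :: complex
  assumes "c < 0" and "A > 0"
  shows "(is_sink (\<lambda>s. of_real c * (of_real A * s + B * cnj s)) \<longleftrightarrow> cmod B < A)
       \<and> (is_saddle (\<lambda>s. of_real c * (of_real A * s + B * cnj s)) \<longleftrightarrow> A < cmod B)
       \<and> \<not> is_source (\<lambda>s. of_real c * (of_real A * s + B * cnj s))"
proof -
  have "c * (A + cmod B) < 0"
    using assms by (simp add: mult_neg_pos add_pos_nonneg)
  moreover have "c * (A - cmod B) < 0 \<longleftrightarrow> cmod B < A"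
    using assms by (simp add: mult_less_0_iff)
  moreover have "c * (A - cmod B) > 0 \<longleftrightarrow> A < cmod B"
    using assms by (simp add: zero_less_mult_iff)
  ultimately show ?thesis
    unfolding is_sink_def is_saddle_def is_source_def real_lin_eigenvalues_conj_linear by auto
qed

theorem mainTheorem13:
  fixes d :: nat and V :: "complex^3 \<Rightarrow> complex^3" and p :: "complex^3"
  assumes hom: "homogeneous_poly_field d V"
    and divfree: "\<forall>q. divergence V q = 0"
    and nonvan: "\<forall>q. q \<noteq> 0 \<longrightarrow> V q \<noteq> 0"
    and p_nz: "p \<noteq> 0"
    and zero: "herm p (V p) = 0"
  shows "(is_sink (leaf_linearization d V p) \<longleftrightarrow>
            (norm (V p))^2 > cmod (herm (DVV V p) p))
       \<and> (is_saddle (leaf_linearization d V p) \<longleftrightarrow>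
            (norm (V p))^2 < cmod (herm (DVV V p) p))
       \<and> \<not> is_source (leaf_linearization d V p)"
proof -
  obtain J where J: "(V has_derivative (\<lambda>h. J *v h)) (at p)"
    using homogeneous_poly_field_has_jacobian[OF hom] .
  have Vp: "V p \<noteq> 0"
    using nonvan p_nz by blast
  have L: "leaf_linearization d V p = (\<lambda>s. of_real (-2 / norm p ^ (2*d)) *
             (of_real ((norm (V p))^2) * s + herm p (DVV V p) * cnj s))"
    using leaf_linearization_eq[OF J p_nz zero Vp] by blast
  have B: "cmod (herm p (DVV V p)) = cmod (herm (DVV V p) p)"
    by (subst herm_commute) simp
  have c: "-2 / norm p ^ (2*d) < 0" and A: "(norm (V p))^2 > 0"
    using p_nz Vp by simp_all
  show ?thesis
    using conj_linear_stability[OF c A, of "herm p (DVV V p)"] unfolding L B .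
qed

end
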